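(* Let $\Omega\subset\mathbb{R}^n$ be a bounded open convex set with smooth boundary and let $u$ be a nonconstant continuous viscosity solution of $(N_\Lambda)$ with $\Lambda=\frac{2}{\operatorname{diam}(\Omega)}$. If $\bar x\in\overline\Omega$ is any point where $u$ attains its maximum over $\overline\Omega$ and $\underline x\in\overline\Omega$ is any point where $u$ attains its minimum over $\overline\Omega$, then $|\bar x-\underline x|=\operatorname{diam}(\Omega)$. In particular, $u$ attains its maximum and its minimum over $\overline\Omega$ only at points of $\partial\Omega$.
   Context: $\operatorname{diam}(\Omega)=\sup_{x,y\in\Omega}|x-y|$. $\nu$ denotes the outer unit normal to $\partial\Omega$, and $\Delta_\infty u=\sum_{i,j=1}^n u_{x_i}u_{x_ix_j}u_{x_j}$. For $\Lambda\ge 0$, problem $(N_\Lambda)$ is $$\min\{|\nabla u|-\Lambda|u|,-\Delta_\infty u\}=0 \text{ in }\{u>0\}\cap\Omega,\quad \max\{\Lambda|u|-|\nabla u|,-\Delta_\infty u\}=0 \text{ in }\{u<0\}\cap\Omega,\quad -\Delta_\infty u=0 \text{ in }\{u=0\}\cap\Omega,\quad \tfrac{\partial u}{\partial\nu}=0 \text{ on }\partial\Omega,$$ understood in the viscosity sense as follows. For $s\in\mathbb{R}$, $\xi\in\mathbb{R}^n$, $X$ a symmetric $n\times n$ matrix, let $F(s,\xi,X)=\min\{|\xi|-\Lambda|s|,-\langle X\xi,\xi\rangle\}$, $G(s,\xi,X)=\max\{\Lambda|s|-|\xi|,-\langle X\xi,\xi\rangle\}$, $H(X)=-\langle X\xi,\xi\rangle$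 (evaluated at the same $\xi$). For a function $u$ and point $x_0$, let $E$ denote $F$ if $u(x_0)>0$, $G$ if $u(x_0)<0$, $H$ if $u(x_0)=0$. An upper semicontinuous $u$ on $\overline\Omega$ is a viscosity subsolution if: for every $x_0\in\Omega$ and $\phi\in C^2(\Omega)$ with $\phi(x_0)=u(x_0)$ and $u(x)<\phi(x)$ for $x\neq x_0$, one has $E(\phi(x_0),\nabla\phi(x_0),\nabla^2\phi(x_0))\le 0$; and for every $x_0\in\partial\Omega$ and $\phi\in C^2(\overline\Omega)$ with the same touching property, $\min\{E(\phi(x_0),\nabla\phi(x_0),\nabla^2\phi(x_0)),\frac{\partial\phi}{\partial\nu}(x_0)\}\le 0$. A lower semicontinuous $u$ is a viscosity supersolution if the same holds with $u(x)>\phi(x)$ for $x\ne x_0$, with "$E\le 0$" replaced by "$E\ge 0$" at interior points and with $\max\{E(\phi(x_0),\nabla\phi(x_0),\nabla^2\phi(x_0)),\frac{\partial\phi}{\partial\nu}(x_0)\}\ge 0$ at boundary points. A continuous $u$ is a viscosity solution if it is both a sub- and a supersolution. *)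

theory Defs
  imports "HOL-Analysis.Analysis"
begin

text \<open>D ds x is the iterated partial
  derivative of f in the directions listed in ds (applied innermost-last).\<close>
definition smooth_on :: "'a::euclidean_space set \<Rightarrow> ('a \<Rightarrow> real) \<Rightarrow> bool" where
  "smooth_on S f \<longleftrightarrow> open S \<and>
     (\<exists>D :: 'a list \<Rightarrow> 'a \<Rightarrow> real.
        (\<forall>x\<in>S. D [] x = f x) \<and>
        (\<forall>ds. continuous_on S (D ds)) \<and>
        (\<forall>ds. \<forall>i\<in>Basis. \<forall>x\<in>S.
            ((\<lambda>t. D ds (x + t *\<^sub>R i)) has_real_derivative D (i # ds) x) (at 0)))"

text \<open>Omega has smooth boundary and nu is its outer unit normal: near every boundary
  point p there is a smooth local defining function rho with nonvanishing gradient,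
  Omega = {rho < 0} locally, and nu p = grad rho p / |grad rho p|.\<close>
definition smooth_boundary_with_normal ::
  "'a::euclidean_space set \<Rightarrow> ('a \<Rightarrow> 'a) \<Rightarrow> bool" where
  "smooth_boundary_with_normal \<Omega> \<nu> \<longleftrightarrow>
     (\<forall>p\<in>frontier \<Omega>. \<exists>U \<rho> D\<rho>. open U \<and> p \<in> U \<and> smooth_on U \<rho> \<and>
        \<Omega> \<inter> U = {x\<in>U. \<rho> x < 0} \<and>
        (\<forall>x\<in>U. (\<rho> has_derivative (\<lambda>h. D\<rho> x \<bullet> h)) (at x) \<and> D\<rho> x \<noteq> 0) \<and>
        \<nu> p = (1 / norm (D\<rho> p)) *\<^sub>R D\<rho> p)"

definition C2_data :: "'a::euclidean_space set \<Rightarrow> ('a \<Rightarrow> real) \<Rightarrow> ('a \<Rightarrow> 'a)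
    \<Rightarrow> ('a \<Rightarrow> 'a \<Rightarrow> 'a) \<Rightarrow> bool" where
  "C2_data S \<phi> D\<phi> H\<phi> \<longleftrightarrow> open S \<and>
     (\<forall>x\<in>S. (\<phi> has_derivative (\<lambda>h. D\<phi> x \<bullet> h)) (at x) \<and> (D\<phi> has_derivative H\<phi> x) (at x)) \<and>
     continuous_on S D\<phi> \<and> (\<forall>v. continuous_on S (\<lambda>x. H\<phi> x v))"

text \<open>The operator E(s, xi, X), where q = <X xi, xi>: F if s > 0, G if s < 0, H if s = 0.\<close>
definition opE :: "real \<Rightarrow> real \<Rightarrow> 'a::euclidean_space \<Rightarrow> real \<Rightarrow> real" where
  "opE \<Lambda> s \<xi> q =
     (if s > 0 then min (norm \<xi> - \<Lambda> * \<bar>s\<bar>) (- q)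
      else if s < 0 then max (\<Lambda> * \<bar>s\<bar> - norm \<xi>) (- q)
      else - q)"

definition usc_on :: "'a::metric_space set \<Rightarrow> ('a \<Rightarrow> real) \<Rightarrow> bool" where
  "usc_on S u \<longleftrightarrow> (\<forall>x\<in>S. \<forall>e>0. \<exists>d>0. \<forall>y\<in>S. dist y x < d \<longrightarrow> u y < u x + e)"

definition lsc_on :: "'a::metric_space set \<Rightarrow> ('a \<Rightarrow> real) \<Rightarrow> bool" where
  "lsc_on S u \<longleftrightarrow> (\<forall>x\<in>S. \<forall>e>0. \<exists>d>0. \<forall>y\<in>S. dist y x < d \<longrightarrow> u y > u x - e)"

definition visc_subsolution ::
  "'a::euclidean_space set \<Rightarrow> ('a \<Rightarrow> 'a) \<Rightarrow> real \<Rightarrow> ('a \<Rightarrow> real) \<Rightarrow> bool" where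
  "visc_subsolution \<Omega> \<nu> \<Lambda> u \<longleftrightarrow>
     usc_on (closure \<Omega>) u \<and>
     (\<forall>x0\<in>\<Omega>. \<forall>\<phi> D\<phi> H\<phi>. C2_data \<Omega> \<phi> D\<phi> H\<phi> \<and> \<phi> x0 = u x0 \<and>
         (\<forall>x\<in>\<Omega>. x \<noteq> x0 \<longrightarrow> u x < \<phi> x) \<longrightarrow>
         opE \<Lambda> (\<phi> x0) (D\<phi> x0) (H\<phi> x0 (D\<phi> x0) \<bullet> D\<phi> x0) \<le> 0) \<and>
     (\<forall>x0\<in>frontier \<Omega>. \<forall>S \<phi> D\<phi> H\<phi>. closure \<Omega> \<subseteq> S \<and> C2_data S \<phi> D\<phi> H\<phi> \<and>
         \<phi> x0 = u x0 \<and> (\<forall>x\<in>closure \<Omega>. x \<noteq> x0 \<longrightarrow> u x < \<phi> x) \<longrightarrow>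
         min (opE \<Lambda> (\<phi> x0) (D\<phi> x0) (H\<phi> x0 (D\<phi> x0) \<bullet> D\<phi> x0)) (D\<phi> x0 \<bullet> \<nu> x0) \<le> 0)"

definition visc_supersolution ::
  "'a::euclidean_space set \<Rightarrow> ('a \<Rightarrow> 'a) \<Rightarrow> real \<Rightarrow> ('a \<Rightarrow> real) \<Rightarrow> bool" where
  "visc_supersolution \<Omega> \<nu> \<Lambda> u \<longleftrightarrow>
     lsc_on (closure \<Omega>) u \<and>
     (\<forall>x0\<in>\<Omega>. \<forall>\<phi> D\<phi> H\<phi>. C2_data \<Omega> \<phi> D\<phi> H\<phi> \<and> \<phi> x0 = u x0 \<and>
         (\<forall>x\<in>\<Omega>. x \<noteq> x0 \<longrightarrow> u x > \<phi> x) \<longrightarrow>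
         opE \<Lambda> (\<phi> x0) (D\<phi> x0) (H\<phi> x0 (D\<phi> x0) \<bullet> D\<phi> x0) \<ge> 0) \<and>
     (\<forall>x0\<in>frontier \<Omega>. \<forall>S \<phi> D\<phi> H\<phi>. closure \<Omega> \<subseteq> S \<and> C2_data S \<phi> D\<phi> H\<phi> \<and>
         \<phi> x0 = u x0 \<and> (\<forall>x\<in>closure \<Omega>. x \<noteq> x0 \<longrightarrow> u x > \<phi> x) \<longrightarrow>
         max (opE \<Lambda> (\<phi> x0) (D\<phi> x0) (H\<phi> x0 (D\<phi> x0) \<bullet> D\<phi> x0)) (D\<phi> x0 \<bullet> \<nu> x0) \<ge> 0)"

definition visc_solution ::
  "'a::euclidean_space set \<Rightarrow> ('a \<Rightarrow> 'a) \<Rightarrow> real \<Rightarrow> ('a \<Rightarrow> real) \<Rightarrow> bool" where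
  "visc_solution \<Omega> \<nu> \<Lambda> u \<longleftrightarrow> continuous_on (closure \<Omega>) u \<and>
     visc_subsolution \<Omega> \<nu> \<Lambda> u \<and> visc_supersolution \<Omega> \<nu> \<Lambda> u"

end

theory Submission
  imports Defs
begin

text \<open>
  Let u solve the problem on a bounded smooth convex domain, with maximum M at xmax and
  minimum m at xmin.  (1) Comparing u from above with a strictly concave radial test function
  centred at an interior point shows that a subsolution cannot be nonpositive without
  vanishing identically; hence M > 0, and, applied to -u (a subsolution because u is a
  supersolution), m < 0.  (2) A second, square-root shaped radial comparison shows the cone
  bound u z >= M - Lambda M |xmax - z| on the closed domain, and symmetrically for -u.
  (3) At the midpoint z of xmax and xmin both cone bounds hold; with Lambda = 2 / diam Omega
  they force u z > 0 > u z unless |xmax - xmin| = diam Omega.  Diametral points of the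
  closure cannot be interior, so both extremal points lie on the boundary.

  The boundary condition enters only through the sign of the outer normal derivative of the
  radial test functions, which is positive because the domain is convex.
\<close>

text \<open>The operator is odd; this is what turns a supersolution u into the subsolution -u.\<close>
lemma opE_neg: "opE \<Lambda> (- s) (- \<xi>) (- q) = - opE \<Lambda> s \<xi> q"
  by (auto simp: opE_def min_def max_def)

lemma opE_shift: "t \<ge> 0 \<Longrightarrow> opE \<Lambda> s \<xi> q - t \<le> opE \<Lambda> s \<xi> (q + t)"
  by (auto simp: opE_def min_def max_def)

lemma opE_pos_concave: "q < 0 \<Longrightarrow> (s > 0 \<longrightarrow> \<Lambda> * s < norm \<xi>) \<Longrightarrow> 0 < opE \<Lambda> s \<xi> q"
  by (auto simp: opE_def)

lemma opE_pos_negative: "s < 0 \<Longrightarrow> norm \<xi> < \<Lambda> * \<bar>s\<bar> \<Longrightarrow> 0 < opE \<Lambda> s \<xi> q"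
  by (auto simp: opE_def)

text \<open>A profile K of class C2 on [0, inf) with first and second derivatives K1 and K2.
  Composed with the squared distance to a centre it yields a C2 radial test function.\<close>
definition radial_profile :: "(real \<Rightarrow> real) \<Rightarrow> (real \<Rightarrow> real) \<Rightarrow> (real \<Rightarrow> real) \<Rightarrow> bool" where
  "radial_profile K K1 K2 \<longleftrightarrow>
     (\<forall>s\<ge>0. (K has_real_derivative K1 s) (at s) \<and> (K1 has_real_derivative K2 s) (at s)) \<and>
     continuous_on {0..} K2"

lemma radial_profile_continuous:
  assumes "radial_profile K K1 K2"
  shows "continuous_on {0..} K"
  using assms unfolding radial_profile_def
  by (meson DERIV_isCont atLeast_iff continuous_at_imp_continuous_on)

lemma norm_sq_has_derivative:
  fixes z :: "'a::euclidean_space"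
  shows "((\<lambda>x. (norm (x - z))^2) has_derivative (\<lambda>h. 2 * ((x - z) \<bullet> h))) (at x)"
proof -
  have "((\<lambda>x. (x - z) \<bullet> (x - z)) has_derivative (\<lambda>h. (x - z) \<bullet> h + h \<bullet> (x - z))) (at x)"
    by (auto intro!: derivative_eq_intros)
  then show ?thesis by (simp add: power2_norm_eq_inner inner_commute)
qed

lemma radial_has_derivative:
  fixes z :: "'a::euclidean_space"
  assumes "\<And>s. s \<ge> 0 \<Longrightarrow> (K has_real_derivative K' s) (at s)"
  shows "((\<lambda>x. K ((norm (x - z))^2)) has_derivative
           (\<lambda>h. K' ((norm (x - z))^2) * (2 * ((x - z) \<bullet> h)))) (at x)"
proof -
  have "(K has_derivative (\<lambda>t. K' ((norm (x - z))^2) * t)) (at ((norm (x - z))^2))"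
    using assms[of "(norm (x - z))^2"] by (simp add: has_field_derivative_def)
  from has_derivative_compose[OF norm_sq_has_derivative this] show ?thesis
    by (simp add: o_def)
qed

lemma C2_data_radial:
  fixes z x0 :: "'a::euclidean_space"
  assumes "radial_profile K K1 K2"
  shows "C2_data UNIV (\<lambda>x. c + K ((norm (x - z))^2) + e * (norm (x - x0))^2)
          (\<lambda>x. (2 * K1 ((norm (x - z))^2)) *\<^sub>R (x - z) + (2 * e) *\<^sub>R (x - x0))
          (\<lambda>x v. (4 * K2 ((norm (x - z))^2) * ((x - z) \<bullet> v)) *\<^sub>R (x - z)
                  + (2 * K1 ((norm (x - z))^2)) *\<^sub>R v + (2 * e) *\<^sub>R v)"
proof -
  let ?s = "\<lambda>x. (norm (x - z))^2"
  have d1: "\<And>s. s \<ge> 0 \<Longrightarrow> (K has_real_derivative K1 s) (at s)"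
   and d2: "\<And>s. s \<ge> 0 \<Longrightarrow> (K1 has_real_derivative K2 s) (at s)"
   and c2: "continuous_on {0..} K2"
    using assms by (auto simp: radial_profile_def)
  have dK: "((\<lambda>x. K (?s x)) has_derivative (\<lambda>h. K1 (?s x) * (2 * ((x - z) \<bullet> h)))) (at x)"
   and dK1: "((\<lambda>x. K1 (?s x)) has_derivative (\<lambda>h. K2 (?s x) * (2 * ((x - z) \<bullet> h)))) (at x)"
    for x using radial_has_derivative[OF d1] radial_has_derivative[OF d2] by blast+
  have cK1: "continuous_on UNIV (\<lambda>x. K1 (?s x))"
    using dK1 by (meson continuous_at_imp_continuous_on has_derivative_continuous)
  have cK2: "continuous_on UNIV (\<lambda>x. K2 (?s x))"
    by (rule continuous_on_compose2[OF c2]) (auto intro!: continuous_intros)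
  have shift: "((\<lambda>x. x - y) has_derivative (\<lambda>h. h)) (at x)" for x y :: 'a
    using has_derivative_diff[OF has_derivative_ident has_derivative_const] by simp
  show ?thesis
    unfolding C2_data_def
  proof (intro conjI ballI allI)
    fix x :: 'a
    have "((\<lambda>x. c + K (?s x) + e * (norm (x - x0))^2) has_derivative
       (\<lambda>h. 0 + K1 (?s x) * (2 * ((x - z) \<bullet> h)) + e * (2 * ((x - x0) \<bullet> h)))) (at x)"
      using has_derivative_add[OF has_derivative_add[OF has_derivative_const dK]
           has_derivative_mult_right[OF norm_sq_has_derivative[of x0 x]], of c e] by simp
    then show "((\<lambda>x. c + K (?s x) + e * (norm (x - x0))^2) has_derivative
       (\<lambda>h. ((2 * K1 (?s x)) *\<^sub>R (x - z) + (2 * e) *\<^sub>R (x - x0)) \<bullet> h)) (at x)"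
      by (simp add: inner_add_left algebra_simps)
    have "((\<lambda>x. (2 * K1 (?s x)) *\<^sub>R (x - z) + (2 * e) *\<^sub>R (x - x0)) has_derivative
       (\<lambda>h. ((2 * K1 (?s x)) *\<^sub>R h + (2 * (K2 (?s x) * (2 * ((x - z) \<bullet> h)))) *\<^sub>R (x - z))
           + ((2 * e) *\<^sub>R h + 0 *\<^sub>R (x - x0)))) (at x)"
      by (rule has_derivative_add[OF has_derivative_scaleR[OF has_derivative_mult_right[OF dK1] shift]
            has_derivative_scaleR[OF has_derivative_const shift]])
    then show "((\<lambda>x. (2 * K1 (?s x)) *\<^sub>R (x - z) + (2 * e) *\<^sub>R (x - x0)) has_derivative
       (\<lambda>v. (4 * K2 (?s x) * ((x - z) \<bullet> v)) *\<^sub>R (x - z) + (2 * K1 (?s x)) *\<^sub>R v + (2 * e) *\<^sub>R v)) (at x)"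
      by (simp add: algebra_simps)
  qed (use cK1 cK2 in \<open>auto intro!: continuous_intros\<close>)
qed

lemma C2_data_neg:
  assumes "C2_data S \<phi> D\<phi> H\<phi>"
  shows "C2_data S (\<lambda>x. - \<phi> x) (\<lambda>x. - D\<phi> x) (\<lambda>x v. - H\<phi> x v)"
proof -
  have "(\<bullet>) (- D\<phi> x) = (\<lambda>h. - (D\<phi> x \<bullet> h))" for x by (rule ext) simp
  then show ?thesis
    using assms unfolding C2_data_def
    by (auto intro!: has_derivative_minus continuous_intros)
qed

lemma C2_data_subset: "C2_data T \<phi> D\<phi> H\<phi> \<Longrightarrow> open S \<Longrightarrow> S \<subseteq> T \<Longrightarrow> C2_data S \<phi> D\<phi> H\<phi>"
  unfolding C2_data_def by (auto intro: continuous_on_subset)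

lemma C2_data_neg_quadratic:
  assumes "C2_data S \<phi> D\<phi> H\<phi>" "x \<in> S"
  shows "(- H\<phi> x (- D\<phi> x)) \<bullet> (- D\<phi> x) = - (H\<phi> x (D\<phi> x) \<bullet> D\<phi> x)"
proof -
  have "linear (H\<phi> x)"
    using assms unfolding C2_data_def by (meson has_derivative_linear)
  then show ?thesis by (simp add: linear_neg)
qed

lemma directional_derivative_nonpos:
  fixes f :: "'a::real_normed_vector \<Rightarrow> real"
  assumes df: "(f has_derivative f') (at p)"
    and below: "eventually (\<lambda>t. f (p + t *\<^sub>R v) \<le> f p) (at_right 0)"
  shows "f' v \<le> 0"
proof (rule ccontr)
  assume "\<not> f' v \<le> 0"
  have line: "((\<lambda>t. p + t *\<^sub>R v) has_derivative (\<lambda>t. t *\<^sub>R v)) (at 0)"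
    by (auto intro!: derivative_eq_intros)
  have "((\<lambda>t. f (p + t *\<^sub>R v)) has_derivative (\<lambda>t. f' (t *\<^sub>R v))) (at 0)"
    using has_derivative_compose[OF line] df by (simp add: o_def)
  moreover have "f' (t *\<^sub>R v) = f' v * t" for t
    using has_derivative_linear[OF df] by (simp add: linear_scale)
  ultimately have "((\<lambda>t. f (p + t *\<^sub>R v)) has_real_derivative f' v) (at 0)"
    by (simp add: has_field_derivative_def)
  from DERIV_pos_inc_right[OF this] \<open>\<not> f' v \<le> 0\<close>
  obtain d where d: "d > 0" "\<And>t. 0 < t \<Longrightarrow> t < d \<Longrightarrow> f p < f (p + t *\<^sub>R v)"
    by auto
  obtain b where b: "b > 0" "\<And>t. 0 < t \<Longrightarrow> t < b \<Longrightarrow> f (p + t *\<^sub>R v) \<le> f p"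
    using below by (auto simp: eventually_at_right_field)
  have "0 < min d b / 2" "min d b / 2 < d" "min d b / 2 < b" using d(1) b(1) by auto
  then show False
    using d(2)[of "min d b / 2"] b(2)[of "min d b / 2"] by fastforce
qed

lemma defining_gradient_outward:
  fixes \<Omega> :: "'a::euclidean_space set"
  assumes op: "open \<Omega>" and cv: "convex \<Omega>" and p: "p \<in> frontier \<Omega>"
    and U: "open U" "p \<in> U" and eq: "\<Omega> \<inter> U = {x\<in>U. \<rho> x < 0}"
    and d\<rho>: "(\<rho> has_derivative (\<lambda>h. g \<bullet> h)) (at p)" and w: "w \<in> \<Omega>"
  shows "g \<bullet> (w - p) \<le> 0"
proof (rule directional_derivative_nonpos[OF d\<rho>])
  have pO: "p \<notin> \<Omega>" and pc: "p \<in> closure \<Omega>"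
    using p op by (auto simp: frontier_def interior_open)
  have \<rho>p: "0 \<le> \<rho> p"
  proof (rule ccontr)
    assume "\<not> 0 \<le> \<rho> p"
    then have "p \<in> \<Omega> \<inter> U" using eq U(2) by auto
    then show False using pO by blast
  qed
  text \<open>By convexity the open segment from w to p lies in the domain, where rho is negative.\<close>
  have seg: "\<rho> (p + t *\<^sub>R (w - p)) < 0" if "0 < t" "t < 1" "p + t *\<^sub>R (w - p) \<in> U" for t
  proof -
    have "open_segment w p \<subseteq> \<Omega>"
      using in_interior_closure_convex_segment[OF cv _ pc] w op by (simp add: interior_open)
    moreover have "p + t *\<^sub>R (w - p) \<in> open_segment w p"
      unfolding in_segment using that w pO
      by (intro conjI exI[of _ "1 - t"]) (auto simp: algebra_simps)
    ultimately show ?thesis using that(3) eq by blast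
  qed
  have "((\<lambda>t. p + t *\<^sub>R (w - p)) \<longlongrightarrow> p + 0 *\<^sub>R (w - p)) (at_right 0)"
    by (intro tendsto_intros)
  then have "eventually (\<lambda>t. p + t *\<^sub>R (w - p) \<in> U) (at_right (0::real))"
    using U by (auto intro: topological_tendstoD)
  moreover have "eventually (\<lambda>t. t < 1) (at_right (0::real))"
    by (auto simp: eventually_at_right_field intro!: exI[of _ 1])
  ultimately show "eventually (\<lambda>t. \<rho> (p + t *\<^sub>R (w - p)) \<le> \<rho> p) (at_right 0)"
    using eventually_at_right_less[of 0]
  proof eventually_elim
    case (elim t)
    then show ?case using seg[of t] \<rho>p by linarith
  qed
qed

text \<open>Convexity: seen from any interior point z, the outer normal at a boundary point p
  points away from z.  This makes the Neumann alternative fail for radial test functions.\<close>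
lemma convex_outer_normal_pos:
  fixes \<Omega> :: "'a::euclidean_space set"
  assumes op: "open \<Omega>" and cv: "convex \<Omega>" and sb: "smooth_boundary_with_normal \<Omega> \<nu>"
    and z: "z \<in> \<Omega>" and p: "p \<in> frontier \<Omega>"
  shows "0 < (p - z) \<bullet> \<nu> p"
proof -
  obtain U \<rho> D\<rho> where U: "open U" "p \<in> U" and eq: "\<Omega> \<inter> U = {x\<in>U. \<rho> x < 0}"
    and d\<rho>: "(\<rho> has_derivative (\<lambda>h. D\<rho> p \<bullet> h)) (at p)" and Dnz: "D\<rho> p \<noteq> 0"
    and nu: "\<nu> p = (1 / norm (D\<rho> p)) *\<^sub>R D\<rho> p"
    using bspec[OF sb[unfolded smooth_boundary_with_normal_def] p] by (elim exE conjE) blast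
  text \<open>Test the outward property at the point w of the ball around z displaced along the gradient.\<close>
  obtain e where e: "e > 0" "ball z e \<subseteq> \<Omega>" using op z openE by blast
  define w where "w = z + (e / 2 / norm (D\<rho> p)) *\<^sub>R D\<rho> p"
  have "w \<in> \<Omega>" using e Dnz by (auto simp: w_def dist_norm)
  then have "D\<rho> p \<bullet> (w - p) \<le> 0" by (rule defining_gradient_outward[OF op cv p U eq d\<rho>])
  moreover have "D\<rho> p \<bullet> (w - p) = D\<rho> p \<bullet> (z - p) + e / 2 * norm (D\<rho> p)"
    using Dnz by (simp add: w_def inner_add_right inner_diff_right dot_square_norm power2_eq_square)
  moreover have "0 < e / 2 * norm (D\<rho> p)" using e(1) Dnz by simp
  ultimately have "0 < D\<rho> p \<bullet> (p - z)" by (simp add: inner_diff_right)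
  then show ?thesis using nu Dnz by (simp add: inner_commute)
qed

lemma negative_near_interior:
  fixes f :: "'a::metric_space \<Rightarrow> real"
  assumes "continuous_on (closure \<Omega>) f" "p \<in> closure \<Omega>" "f p < 0"
  shows "\<exists>z\<in>\<Omega>. f z < 0"
proof -
  obtain d where d: "d > 0" "\<forall>x\<in>closure \<Omega>. dist x p < d \<longrightarrow> dist (f x) (f p) < - f p"
    using assms unfolding continuous_on_iff by (metis neg_0_less_iff_less)
  obtain z where z: "z \<in> \<Omega>" "dist z p < d" using assms(2) d(1) closure_approachable by metis
  then have "dist (f z) (f p) < - f p" using d closure_subset by blast
  then have "f z < 0" by (auto simp: dist_real_def abs_less_iff)
  then show ?thesis using z by blast
qed

lemma continuous_on_small_radius:
  fixes u :: "'a::metric_space \<Rightarrow> real"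
  assumes "continuous_on S u" "z \<in> S" "\<epsilon> > 0"
  obtains \<delta> where "0 < \<delta>" "\<delta> \<le> 1" "\<forall>x\<in>S. dist x z < \<delta> \<longrightarrow> \<bar>u x - u z\<bar> < \<epsilon>"
proof -
  obtain d where "d > 0" "\<forall>x\<in>S. dist x z < d \<longrightarrow> dist (u x) (u z) < \<epsilon>"
    using assms unfolding continuous_on_iff by blast
  then show ?thesis
    using that[of "min d 1"] by (auto simp: dist_real_def)
qed

lemma radial_max_exists:
  fixes u :: "'a::euclidean_space \<Rightarrow> real"
  assumes "compact S" "S \<noteq> {}" "continuous_on S u" "radial_profile K K1 K2"
  obtains x0 where "x0 \<in> S" "\<forall>x\<in>S. u x - K ((norm (x - z))^2) \<le> u x0 - K ((norm (x0 - z))^2)"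
proof -
  have "continuous_on S (\<lambda>x. K ((norm (x - z))^2))"
    by (rule continuous_on_compose2[OF radial_profile_continuous[OF assms(4)]])
      (auto intro!: continuous_intros)
  then have "continuous_on S (\<lambda>x. u x - K ((norm (x - z))^2))"
    using assms(3) by (intro continuous_intros)
  then show ?thesis
    using continuous_attains_sup[OF assms(1,2)] that by blast
qed

lemma supersolution_neg_subsolution:
  assumes "visc_supersolution \<Omega> \<nu> \<Lambda> u"
  shows "visc_subsolution \<Omega> \<nu> \<Lambda> (\<lambda>x. - u x)"
  unfolding visc_subsolution_def
proof (intro conjI ballI allI impI)
  show "usc_on (closure \<Omega>) (\<lambda>x. - u x)"
    using assms unfolding visc_supersolution_def usc_on_def lsc_on_def
    by (metis neg_less_iff_less minus_diff_eq diff_conv_add_uminus add.commute)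
next
  fix x0 \<phi> D\<phi> H\<phi>
  assume x0: "x0 \<in> \<Omega>"
    and T: "C2_data \<Omega> \<phi> D\<phi> H\<phi> \<and> \<phi> x0 = - u x0 \<and> (\<forall>x\<in>\<Omega>. x \<noteq> x0 \<longrightarrow> - u x < \<phi> x)"
  have super: "\<And>\<psi> D\<psi> H\<psi>. C2_data \<Omega> \<psi> D\<psi> H\<psi> \<Longrightarrow> \<psi> x0 = u x0 \<Longrightarrow>
      \<forall>x\<in>\<Omega>. x \<noteq> x0 \<longrightarrow> \<psi> x < u x \<Longrightarrow> 0 \<le> opE \<Lambda> (\<psi> x0) (D\<psi> x0) (H\<psi> x0 (D\<psi> x0) \<bullet> D\<psi> x0)"
    using assms x0 unfolding visc_supersolution_def by blast
  have "opE \<Lambda> (- \<phi> x0) (- D\<phi> x0) ((- H\<phi> x0 (- D\<phi> x0)) \<bullet> (- D\<phi> x0)) \<ge> 0"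
    by (rule super[OF C2_data_neg]) (use T in auto)
  moreover have "(- H\<phi> x0 (- D\<phi> x0)) \<bullet> (- D\<phi> x0) = - (H\<phi> x0 (D\<phi> x0) \<bullet> D\<phi> x0)"
    using C2_data_neg_quadratic T x0 by blast
  ultimately show "opE \<Lambda> (\<phi> x0) (D\<phi> x0) (H\<phi> x0 (D\<phi> x0) \<bullet> D\<phi> x0) \<le> 0"
    by (simp only: opE_neg)
next
  fix x0 S \<phi> D\<phi> H\<phi>
  assume x0: "x0 \<in> frontier \<Omega>" and T: "closure \<Omega> \<subseteq> S \<and> C2_data S \<phi> D\<phi> H\<phi> \<and>
     \<phi> x0 = - u x0 \<and> (\<forall>x\<in>closure \<Omega>. x \<noteq> x0 \<longrightarrow> - u x < \<phi> x)"
  have xS: "x0 \<in> S" using x0 T by (auto simp: frontier_def)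
  have super: "\<And>\<psi> D\<psi> H\<psi>. C2_data S \<psi> D\<psi> H\<psi> \<Longrightarrow> \<psi> x0 = u x0 \<Longrightarrow>
      \<forall>x\<in>closure \<Omega>. x \<noteq> x0 \<longrightarrow> \<psi> x < u x \<Longrightarrow>
      0 \<le> max (opE \<Lambda> (\<psi> x0) (D\<psi> x0) (H\<psi> x0 (D\<psi> x0) \<bullet> D\<psi> x0)) (D\<psi> x0 \<bullet> \<nu> x0)"
    using assms x0 T unfolding visc_supersolution_def by blast
  have "max (opE \<Lambda> (- \<phi> x0) (- D\<phi> x0) ((- H\<phi> x0 (- D\<phi> x0)) \<bullet> (- D\<phi> x0))) ((- D\<phi> x0) \<bullet> \<nu> x0) \<ge> 0"
    by (rule super[OF C2_data_neg]) (use T in auto)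
  moreover have "(- H\<phi> x0 (- D\<phi> x0)) \<bullet> (- D\<phi> x0) = - (H\<phi> x0 (D\<phi> x0) \<bullet> D\<phi> x0)"
    using C2_data_neg_quadratic T xS by blast
  ultimately have "max (- opE \<Lambda> (\<phi> x0) (D\<phi> x0) (H\<phi> x0 (D\<phi> x0) \<bullet> D\<phi> x0)) (- (D\<phi> x0 \<bullet> \<nu> x0)) \<ge> 0"
    by (simp only: opE_neg) simp
  then show "min (opE \<Lambda> (\<phi> x0) (D\<phi> x0) (H\<phi> x0 (D\<phi> x0) \<bullet> D\<phi> x0)) (D\<phi> x0 \<bullet> \<nu> x0) \<le> 0"
    by linarith
qed

text \<open>If u - K(|x - z|^2) is maximal at x0 and E is positive for the
  radial data at x0, then a small quadratic penalisation gives a C2 function touching u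
  strictly from above at x0 with the same gradient and still positive E.\<close>
lemma radial_test_function:
  fixes S :: "'a::euclidean_space set"
  assumes K: "radial_profile K K1 K2"
    and max: "\<forall>x\<in>S. u x - K ((norm (x - z))^2) \<le> u x0 - K ((norm (x0 - z))^2)"
    and \<sigma>: "\<sigma> = (norm (x0 - z))^2"
    and E_pos: "0 < opE \<Lambda> (u x0) ((2 * K1 \<sigma>) *\<^sub>R (x0 - z)) (8 * (K1 \<sigma>)^2 * \<sigma> * (2 * K2 \<sigma> * \<sigma> + K1 \<sigma>))"
  obtains \<phi> D\<phi> H\<phi> where "C2_data UNIV \<phi> D\<phi> H\<phi>" "\<phi> x0 = u x0" "\<forall>x\<in>S. x \<noteq> x0 \<longrightarrow> u x < \<phi> x"
    "D\<phi> x0 = (2 * K1 \<sigma>) *\<^sub>R (x0 - z)" "0 < opE \<Lambda> (\<phi> x0) (D\<phi> x0) (H\<phi> x0 (D\<phi> x0) \<bullet> D\<phi> x0)"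
proof -
  define \<xi> where "\<xi> = (2 * K1 \<sigma>) *\<^sub>R (x0 - z)"
  define q where "q = 8 * (K1 \<sigma>)^2 * \<sigma> * (2 * K2 \<sigma> * \<sigma> + K1 \<sigma>)"
  define E where "E = opE \<Lambda> (u x0) \<xi> q"
  define A where "A = 8 * (K1 \<sigma>)^2 * \<sigma>"
  have A0: "A \<ge> 0" using \<sigma> by (simp add: A_def)
  have E: "0 < E" using E_pos by (simp add: E_def \<xi>_def q_def)
  text \<open>The penalisation e makes the touching strict; it is small enough to keep E positive.\<close>
  define e where "e = E / (2 * (A + 1))"
  have e0: "e > 0" using E A0 by (simp add: e_def)
  have eA: "e * A < E"
  proof -
    have "e * A = E * (A / (2 * (A + 1)))" by (simp add: e_def)
    also have "\<dots> < E * 1" using E A0 by (intro mult_strict_left_mono) (auto simp: field_simps)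
    finally show ?thesis by simp
  qed
  define \<phi> where "\<phi> = (\<lambda>x. u x0 - K \<sigma> + K ((norm (x - z))^2) + e * (norm (x - x0))^2)"
  define D\<phi> where "D\<phi> = (\<lambda>x. (2 * K1 ((norm (x - z))^2)) *\<^sub>R (x - z) + (2 * e) *\<^sub>R (x - x0))"
  define H\<phi> where "H\<phi> = (\<lambda>x v. (4 * K2 ((norm (x - z))^2) * ((x - z) \<bullet> v)) *\<^sub>R (x - z)
                  + (2 * K1 ((norm (x - z))^2)) *\<^sub>R v + (2 * e) *\<^sub>R v)"
  have D\<phi>x0: "D\<phi> x0 = \<xi>" by (simp add: D\<phi>_def \<xi>_def \<sigma>)
  have \<phi>x0: "\<phi> x0 = u x0" by (simp add: \<phi>_def \<sigma>)
  have touch: "u x < \<phi> x" if "x \<in> S" "x \<noteq> x0" for x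
  proof -
    have "u x \<le> u x0 - K \<sigma> + K ((norm (x - z))^2)" using max that(1) \<sigma> by fastforce
    moreover have "0 < e * (norm (x - x0))^2" using e0 that(2) by simp
    ultimately show ?thesis by (simp add: \<phi>_def)
  qed
  have "H\<phi> x0 (D\<phi> x0) \<bullet> D\<phi> x0 = q + e * A"
  proof -
    have sq: "\<sigma> = (x0 - z) \<bullet> (x0 - z)" by (simp add: \<sigma> power2_norm_eq_inner)
    have "H\<phi> x0 (D\<phi> x0) \<bullet> D\<phi> x0
        = 4 * K2 \<sigma> * ((x0 - z) \<bullet> \<xi>) * ((x0 - z) \<bullet> \<xi>) + (2 * K1 \<sigma> + 2 * e) * (\<xi> \<bullet> \<xi>)"
      unfolding D\<phi>x0 by (simp add: H\<phi>_def \<sigma> inner_add_left algebra_simps inner_commute)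
    also have "\<dots> = q + e * A"
      by (simp add: \<xi>_def q_def A_def sq power2_eq_square algebra_simps)
    finally show ?thesis .
  qed
  then have "0 < opE \<Lambda> (\<phi> x0) (D\<phi> x0) (H\<phi> x0 (D\<phi> x0) \<bullet> D\<phi> x0)"
    using opE_shift[of "e * A" \<Lambda> "u x0" \<xi> q] e0 A0 eA \<phi>x0 D\<phi>x0 by (simp add: E_def)
  moreover have "C2_data UNIV \<phi> D\<phi> H\<phi>"
    unfolding \<phi>_def D\<phi>_def H\<phi>_def by (rule C2_data_radial[OF K])
  ultimately show ?thesis
    using that \<phi>x0 touch D\<phi>x0 by (simp add: \<xi>_def)
qed

text \<open>Radial touching argument: the test function of the previous lemma is excluded by the
  subsolution property, at interior points directly, at boundary points because the normal
  derivative of a radial test function centred inside a convex domain is positive.\<close>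
lemma radial_test_contradiction:
  fixes \<Omega> :: "'a::euclidean_space set"
  assumes op: "open \<Omega>" and cv: "convex \<Omega>" and sb: "smooth_boundary_with_normal \<Omega> \<nu>"
    and sub: "visc_subsolution \<Omega> \<nu> \<Lambda> u" and z: "z \<in> \<Omega>"
    and K: "radial_profile K K1 K2"
    and x0: "x0 \<in> closure \<Omega>"
    and max: "\<forall>x\<in>closure \<Omega>. u x - K ((norm (x - z))^2) \<le> u x0 - K ((norm (x0 - z))^2)"
    and \<sigma>: "\<sigma> = (norm (x0 - z))^2" and K1_pos: "0 < K1 \<sigma>"
    and E_pos: "0 < opE \<Lambda> (u x0) ((2 * K1 \<sigma>) *\<^sub>R (x0 - z)) (8 * (K1 \<sigma>)^2 * \<sigma> * (2 * K2 \<sigma> * \<sigma> + K1 \<sigma>))"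
  shows False
proof -
  obtain \<phi> D\<phi> H\<phi> where C2: "C2_data UNIV \<phi> D\<phi> H\<phi>" and \<phi>x0: "\<phi> x0 = u x0"
    and touch: "\<forall>x\<in>closure \<Omega>. x \<noteq> x0 \<longrightarrow> u x < \<phi> x" and D\<phi>x0: "D\<phi> x0 = (2 * K1 \<sigma>) *\<^sub>R (x0 - z)"
    and E_test: "0 < opE \<Lambda> (\<phi> x0) (D\<phi> x0) (H\<phi> x0 (D\<phi> x0) \<bullet> D\<phi> x0)"
    using radial_test_function[OF K max \<sigma> E_pos] by blast
  show False
  proof (cases "x0 \<in> \<Omega>")
    case True
    have "C2_data \<Omega> \<phi> D\<phi> H\<phi>" using C2_data_subset[OF C2 op] by simp
    then have "opE \<Lambda> (\<phi> x0) (D\<phi> x0) (H\<phi> x0 (D\<phi> x0) \<bullet> D\<phi> x0) \<le> 0"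
      using sub True \<phi>x0 touch closure_subset unfolding visc_subsolution_def by blast
    then show False using E_test by simp
  next
    case False
    then have fr: "x0 \<in> frontier \<Omega>" using x0 op by (simp add: frontier_def interior_open)
    have "min (opE \<Lambda> (\<phi> x0) (D\<phi> x0) (H\<phi> x0 (D\<phi> x0) \<bullet> D\<phi> x0)) (D\<phi> x0 \<bullet> \<nu> x0) \<le> 0"
      using sub fr C2 \<phi>x0 touch unfolding visc_subsolution_def by blast
    moreover have "0 < D\<phi> x0 \<bullet> \<nu> x0"
      using convex_outer_normal_pos[OF op cv sb z fr] K1_pos by (simp add: D\<phi>x0)
    ultimately show False using E_test by simp
  qed
qed

lemma radial_test_concave:
  fixes \<Omega> :: "'a::euclidean_space set"
  assumes op: "open \<Omega>" and cv: "convex \<Omega>" and sb: "smooth_boundary_with_normal \<Omega> \<nu>"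
    and sub: "visc_subsolution \<Omega> \<nu> \<Lambda> u" and z: "z \<in> \<Omega>"
    and K: "radial_profile K K1 K2"
    and x0: "x0 \<in> closure \<Omega>"
    and max: "\<forall>x\<in>closure \<Omega>. u x - K ((norm (x - z))^2) \<le> u x0 - K ((norm (x0 - z))^2)"
    and \<sigma>: "\<sigma> = (norm (x0 - z))^2" and pos: "0 < \<sigma>" "0 < K1 \<sigma>"
    and concave: "2 * K2 \<sigma> * \<sigma> + K1 \<sigma> < 0"
    and steep: "0 < u x0 \<longrightarrow> \<Lambda> * u x0 < 2 * K1 \<sigma> * norm (x0 - z)"
  shows False
proof (rule radial_test_contradiction[OF op cv sb sub z K x0 max \<sigma> pos(2)])
  show "0 < opE \<Lambda> (u x0) ((2 * K1 \<sigma>) *\<^sub>R (x0 - z)) (8 * (K1 \<sigma>)^2 * \<sigma> * (2 * K2 \<sigma> * \<sigma> + K1 \<sigma>))"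
    using pos concave steep by (intro opE_pos_concave) (simp_all add: mult_pos_neg)
qed

lemma radial_profile_reciprocal:
  fixes \<beta> h :: real
  assumes h: "h > 0"
  shows "radial_profile (\<lambda>s. - \<beta> / (s + h)) (\<lambda>s. \<beta> / (s + h)^2) (\<lambda>s. - 2 * \<beta> / (s + h)^3)"
  unfolding radial_profile_def
proof (intro conjI allI impI)
  fix s :: real
  assume "0 \<le> s"
  then have ne: "s + h \<noteq> 0" using h by simp
  show "((\<lambda>s. - \<beta> / (s + h)) has_real_derivative \<beta> / (s + h)^2) (at s)"
    using ne by (auto intro!: derivative_eq_intros simp: field_simps power2_eq_square)
  have "((\<lambda>s. \<beta> / (s + h)^2) has_real_derivative
      (0 * (s + h)^2 - \<beta> * (of_nat 2 * (s + h)^(2 - 1) * (1 + 0))) / ((s + h)^2 * (s + h)^2)) (at s)"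
    using ne by (intro derivative_eq_intros) auto
  moreover have "(0 * (s + h)^2 - \<beta> * (of_nat 2 * (s + h)^(2 - 1) * (1 + 0))) / ((s + h)^2 * (s + h)^2)
      = - 2 * \<beta> / (s + h)^3"
  proof -
    define t where "t = s + h"
    have "t \<noteq> 0" using ne by (simp add: t_def)
    then show ?thesis
      unfolding t_def[symmetric] by (simp add: field_simps power2_eq_square power3_eq_cube)
  qed
  ultimately show "((\<lambda>s. \<beta> / (s + h)^2) has_real_derivative - 2 * \<beta> / (s + h)^3) (at s)"
    by simp
next
  show "continuous_on {0..} (\<lambda>s. - 2 * \<beta> / (s + h)^3)"
    using h by (intro continuous_intros) (auto simp: add_nonneg_pos)
qed

lemma reciprocal_profile_estimates:
  fixes \<beta> h \<sigma> :: real
  assumes \<beta>: "0 < \<beta>" and h: "0 < h" and \<sigma>: "0 \<le> \<sigma>"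
  shows "\<beta> / (\<sigma> + h)^2 \<le> \<beta> / h^2"
    and "h \<le> \<sigma> \<Longrightarrow> 2 * (- 2 * \<beta> / (\<sigma> + h)^3) * \<sigma> + \<beta> / (\<sigma> + h)^2 < 0"
proof -
  have "h^2 \<le> (\<sigma> + h)^2" using h \<sigma> by (intro power_mono) auto
  moreover have "0 < (\<sigma> + h)^2 * h^2" using h \<sigma> by (simp add: add_nonneg_pos)
  ultimately show "\<beta> / (\<sigma> + h)^2 \<le> \<beta> / h^2" using \<beta> by (intro divide_left_mono) auto
  assume h\<sigma>: "h \<le> \<sigma>"
  have "2 * (- 2 * \<beta> / t^3) * \<sigma> + \<beta> / t^2 = \<beta> * (t - 4 * \<sigma>) / t^3" if "t \<noteq> 0" for t :: real
    using that by (simp add: field_simps power2_eq_square power3_eq_cube)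
  from this[of "\<sigma> + h"] have "2 * (- 2 * \<beta> / (\<sigma> + h)^3) * \<sigma> + \<beta> / (\<sigma> + h)^2
      = \<beta> * (h - 3 * \<sigma>) / (\<sigma> + h)^3"
    using h \<sigma> by (simp add: algebra_simps)
  also have "\<dots> < 0" using h\<sigma> h \<beta> by (intro divide_neg_pos mult_pos_neg) auto
  finally show "2 * (- 2 * \<beta> / (\<sigma> + h)^3) * \<sigma> + \<beta> / (\<sigma> + h)^2 < 0" .
qed

text \<open>Touch u from above by the reciprocal
  profile centred at an interior point z where u < 0: near z the gradient of the test
  function is too small, away from z it is concave.\<close>
lemma nonpositive_subsolution_vanishes:
  fixes \<Omega> :: "'a::euclidean_space set"
  assumes op: "open \<Omega>" and cv: "convex \<Omega>" and bd: "bounded \<Omega>"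
    and sb: "smooth_boundary_with_normal \<Omega> \<nu>"
    and sub: "visc_subsolution \<Omega> \<nu> \<Lambda> u" and cont: "continuous_on (closure \<Omega>) u"
    and \<Lambda>: "\<Lambda> > 0" and nonpos: "\<forall>x\<in>closure \<Omega>. u x \<le> 0" and p: "p \<in> closure \<Omega>"
  shows "u p = 0"
proof (rule ccontr)
  assume "u p \<noteq> 0"
  then have "u p < 0" using nonpos p by force
  then obtain z where z: "z \<in> \<Omega>" "u z < 0"
    using negative_near_interior[OF cont p] by blast
  define \<mu> where "\<mu> = - u z / 2"
  have \<mu>: "\<mu> > 0" using z by (simp add: \<mu>_def)
  have zc: "z \<in> closure \<Omega>" using z closure_subset by blast
  obtain \<delta> where \<delta>: "0 < \<delta>" "\<delta> \<le> 1" and near: "\<forall>x\<in>closure \<Omega>. dist x z < \<delta> \<longrightarrow> \<bar>u x - u z\<bar> < \<mu>"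
    using continuous_on_small_radius[OF cont zc \<mu>] by blast
  define h where "h = \<delta>^2"
  have h: "h > 0" using \<delta> by (simp add: h_def)
  define \<beta> where "\<beta> = \<Lambda> * \<mu> * h^2 / 4"
  have \<beta>: "\<beta> > 0" using \<Lambda> \<mu> h by (simp add: \<beta>_def)
  define K where "K = (\<lambda>s::real. - \<beta> / (s + h))"
  define K1 where "K1 = (\<lambda>s::real. \<beta> / (s + h)^2)"
  define K2 where "K2 = (\<lambda>s::real. - 2 * \<beta> / (s + h)^3)"
  have K: "radial_profile K K1 K2"
    unfolding K_def K1_def K2_def by (rule radial_profile_reciprocal[OF h])
  have "compact (closure \<Omega>)" "closure \<Omega> \<noteq> {}" using bd zc by auto
  then obtain x0 where x0: "x0 \<in> closure \<Omega>"
    and max: "\<forall>x\<in>closure \<Omega>. u x - K ((norm (x - z))^2) \<le> u x0 - K ((norm (x0 - z))^2)"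
    using radial_max_exists[OF _ _ cont K, of z] by blast
  define \<sigma> where "\<sigma> = (norm (x0 - z))^2"
  have \<sigma>0: "0 \<le> \<sigma>" by (simp add: \<sigma>_def)
  have K1_pos: "0 < K1 \<sigma>" using \<beta> h \<sigma>0 by (simp add: K1_def add_nonneg_pos)
  show False
  proof (cases "norm (x0 - z) < \<delta>")
    case True
    text \<open>Near z the test gradient is too small to beat the zeroth-order term.\<close>
    have ux0: "u x0 < - \<mu>" using near x0 True by (fastforce simp: dist_norm \<mu>_def)
    have "norm ((2 * K1 \<sigma>) *\<^sub>R (x0 - z)) = 2 * K1 \<sigma> * norm (x0 - z)" using K1_pos by simp
    also have "\<dots> \<le> 2 * (\<beta> / h^2) * 1"
      using reciprocal_profile_estimates(1)[OF \<beta> h \<sigma>0] True \<delta> K1_pos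
      by (intro mult_mono mult_left_mono) (auto simp: K1_def)
    also have "\<dots> = \<Lambda> * (\<mu> / 2)" using h by (simp add: \<beta>_def)
    also have "\<dots> < \<Lambda> * \<bar>u x0\<bar>" using ux0 \<Lambda> \<mu> by (intro mult_strict_left_mono) auto
    finally have "0 < opE \<Lambda> (u x0) ((2 * K1 \<sigma>) *\<^sub>R (x0 - z)) (8 * (K1 \<sigma>)^2 * \<sigma> * (2 * K2 \<sigma> * \<sigma> + K1 \<sigma>))"
      using ux0 \<mu> by (intro opE_pos_negative) auto
    then show False
      by (rule radial_test_contradiction[OF op cv sb sub z(1) K x0 max \<sigma>_def K1_pos])
  next
    case False
    text \<open>Away from z the profile is concave along the gradient direction.\<close>
    have h\<sigma>: "h \<le> \<sigma>" unfolding \<sigma>_def h_def using False \<delta> by (intro power_mono) auto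
    show False
    proof (rule radial_test_concave[OF op cv sb sub z(1) K x0 max \<sigma>_def _ K1_pos])
      show "0 < \<sigma>" using h h\<sigma> by simp
      show "2 * K2 \<sigma> * \<sigma> + K1 \<sigma> < 0"
        using reciprocal_profile_estimates(2)[OF \<beta> h \<sigma>0 h\<sigma>] by (simp add: K1_def K2_def)
      show "0 < u x0 \<longrightarrow> \<Lambda> * u x0 < 2 * K1 \<sigma> * norm (x0 - z)" using nonpos x0 by auto
    qed
  qed
qed

lemma subsolution_max_positive:
  fixes \<Omega> :: "'a::euclidean_space set"
  assumes "open \<Omega>" "convex \<Omega>" "bounded \<Omega>" "smooth_boundary_with_normal \<Omega> \<nu>"
    and "visc_subsolution \<Omega> \<nu> \<Lambda> u" "continuous_on (closure \<Omega>) u" "\<Lambda> > 0"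
    and "\<forall>x\<in>closure \<Omega>. u x \<le> u xmax" and "p \<in> closure \<Omega>" "u p \<noteq> 0"
  shows "0 < u xmax"
  using nonpositive_subsolution_vanishes[OF assms(1-7), of p] assms(8-10) by force

text \<open>The profile  a sqrt(s + h) - b s,  a smoothed cone with slope about a.\<close>
lemma radial_profile_sqrt:
  fixes a b h :: real
  assumes h: "h > 0"
  shows "radial_profile (\<lambda>s. a * sqrt (s + h) - b * s) (\<lambda>s. a / (2 * sqrt (s + h)) - b)
           (\<lambda>s. - a / (4 * (s + h) * sqrt (s + h)))"
  unfolding radial_profile_def
proof (intro conjI allI impI)
  fix s :: real
  assume "0 \<le> s"
  then have p: "0 < s + h" using h by simp
  have dsqrt: "((\<lambda>s. sqrt (s + h)) has_real_derivative inverse (sqrt (s + h)) / 2) (at s)"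
    using p by (auto intro!: derivative_eq_intros)
  show "((\<lambda>s. a * sqrt (s + h) - b * s) has_real_derivative a / (2 * sqrt (s + h)) - b) (at s)"
    using DERIV_diff[OF DERIV_cmult[OF dsqrt, of a] DERIV_cmult[OF DERIV_ident, of b]]
    by (simp add: field_simps)
  have "((\<lambda>s. inverse (2 * sqrt (s + h))) has_real_derivative
      - ((2 * (inverse (sqrt (s + h)) / 2)) * inverse ((2 * sqrt (s + h)) ^ Suc (Suc 0)))) (at s)"
    by (rule DERIV_inverse_fun[OF DERIV_cmult[OF dsqrt, of 2]]) (use p in simp)
  from DERIV_diff[OF DERIV_cmult[OF this, of a] DERIV_const[of b]]
  have "((\<lambda>s. a / (2 * sqrt (s + h)) - b) has_real_derivative
      a * - ((2 * (inverse (sqrt (s + h)) / 2)) * inverse ((2 * sqrt (s + h)) ^ Suc (Suc 0))) - 0) (at s)"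
    by (simp only: divide_inverse)
  moreover have "a * - ((2 * (inverse (sqrt (s + h)) / 2)) * inverse ((2 * sqrt (s + h)) ^ Suc (Suc 0))) - 0
      = - a / (4 * (s + h) * sqrt (s + h))"
  proof -
    have "a * - ((2 * (inverse t / 2)) * inverse ((2 * t) ^ Suc (Suc 0))) - 0
        = - a / (4 * (t * t) * t)" if "t > 0" for t :: real
      using that by (simp add: field_simps)
    moreover have "sqrt (s + h) * sqrt (s + h) = s + h" using p by simp
    ultimately show ?thesis using p by (metis real_sqrt_gt_zero)
  qed
  ultimately show "((\<lambda>s. a / (2 * sqrt (s + h)) - b) has_real_derivative
      - a / (4 * (s + h) * sqrt (s + h))) (at s)"
    by simp
next
  show "continuous_on {0..} (\<lambda>s. - a / (4 * (s + h) * sqrt (s + h)))"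
    using h by (intro continuous_intros) (auto simp: add_nonneg_pos)
qed

lemma cone_parameters:
  fixes c \<gamma> r D \<delta> :: real
  assumes c: "0 \<le> c" and \<gamma>: "0 < \<gamma>" and r: "0 \<le> r" and D: "0 \<le> D" and \<delta>: "0 < \<delta>"
  obtains \<theta> b h where "0 < \<theta>" "\<theta> * r < \<gamma> / 4" "0 < b" "b \<le> \<gamma> / 4" "2 * b * D < \<theta> / 4"
    "0 < h" "(c + \<theta>) * h / \<delta>^2 \<le> \<theta> / 4" "(c + \<theta>) * h \<le> b * \<delta>^3"
proof -
  define \<theta> where "\<theta> = \<gamma> / (4 * (r + 1))"
  define b where "b = min (\<theta> / (8 * (D + 1))) (\<gamma> / 4)"
  define a where "a = c + \<theta>"
  define h where "h = min (\<theta> * \<delta>^2 / (4 * a)) (b * \<delta>^3 / a)"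
  have \<theta>: "0 < \<theta>" and b: "0 < b" using \<gamma> r D by (auto simp: \<theta>_def b_def)
  have a: "0 < a" using c \<theta> by (simp add: a_def)
  have "\<theta> * r = (\<gamma> / 4) * (r / (r + 1))" using r by (simp add: \<theta>_def)
  also have "\<dots> < (\<gamma> / 4) * 1" using \<gamma> r by (intro mult_strict_left_mono) auto
  finally have "\<theta> * r < \<gamma> / 4" by simp
  moreover have "2 * b * D < \<theta> / 4"
  proof -
    have "2 * b * D \<le> 2 * (\<theta> / (8 * (D + 1))) * D"
      using D by (intro mult_right_mono) (auto simp: b_def)
    also have "\<dots> = (\<theta> / 4) * (D / (D + 1))" using D by (simp add: field_simps)
    also have "\<dots> < (\<theta> / 4) * 1" using \<theta> D by (intro mult_strict_left_mono) auto
    finally show ?thesis by simp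
  qed
  moreover have "a * h / \<delta>^2 \<le> \<theta> / 4"
  proof -
    have "a * h \<le> a * (\<theta> * \<delta>^2 / (4 * a))" using a by (intro mult_left_mono) (auto simp: h_def)
    then show ?thesis using a \<delta> by (simp add: divide_le_eq)
  qed
  moreover have "a * h \<le> b * \<delta>^3"
  proof -
    have "a * h \<le> a * (b * \<delta>^3 / a)" using a by (intro mult_left_mono) (auto simp: h_def)
    then show ?thesis using a by simp
  qed
  moreover have "0 < h" using \<theta> \<delta> a b by (simp add: h_def)
  moreover have "b \<le> \<gamma> / 4" unfolding b_def by (rule min.cobounded2)
  ultimately show ?thesis
    using that[of \<theta> b h] \<theta> b unfolding a_def by blast
qed

lemma sqrt_profile_estimates:
  fixes a b h \<delta> \<sigma> :: real
  assumes a: "0 < a" and b: "0 < b" and h: "0 < h" and \<delta>: "0 < \<delta>" and \<sigma>: "\<delta>^2 \<le> \<sigma>"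
  shows "a * h \<le> b * \<delta>^3 \<Longrightarrow>
           2 * (- a / (4 * (\<sigma> + h) * sqrt (\<sigma> + h))) * \<sigma> + (a / (2 * sqrt (\<sigma> + h)) - b) < 0"
    and "a - a * h / \<delta>^2 - 2 * b * sqrt \<sigma> \<le> 2 * (a / (2 * sqrt (\<sigma> + h)) - b) * sqrt \<sigma>"
proof -
  define t where "t = sqrt (\<sigma> + h)"
  have "0 < \<delta>^2" using \<delta> by simp
  then have \<sigma>0: "0 < \<sigma>" using \<sigma> by linarith
  have t: "0 < t" "t * t = \<sigma> + h" using \<sigma>0 h by (auto simp: t_def)
  have t\<delta>: "\<delta> \<le> t"
    using real_sqrt_le_mono[of "\<delta>^2" "\<sigma> + h"] \<sigma> h \<delta> by (simp add: t_def)
  show "2 * (- a / (4 * (\<sigma> + h) * sqrt (\<sigma> + h))) * \<sigma> + (a / (2 * sqrt (\<sigma> + h)) - b) < 0"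
    if ah: "a * h \<le> b * \<delta>^3"
  proof -
    have "\<delta>^3 \<le> (t * t) * t"
      unfolding power3_eq_cube using \<delta> t\<delta> by (intro mult_mono) auto
    then have "b * \<delta>^3 \<le> b * ((t * t) * t)" using b by simp
    moreover have "0 < b * ((t * t) * t)" using b t(1) by simp
    ultimately have "a * h < 2 * b * ((t * t) * t)" using ah by linarith
    then have "a * h / (2 * (t * t) * t) - b < 0" using t(1) by (simp add: divide_less_eq)
    moreover have "2 * (- a / (4 * (t * t) * t)) * \<sigma> + (a / (2 * t) - b) = a * h / (2 * (t * t) * t) - b"
    proof -
      have \<sigma>t: "\<sigma> = t * t - h" using t(2) by simp
      have "2 * (- a / (4 * (t * t) * t)) * (t * t - h) + (a / (2 * t) - b) = a * h / (2 * (t * t) * t) - b"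
        using t(1) by (simp add: field_simps)
      then show ?thesis unfolding \<sigma>t .
    qed
    ultimately show ?thesis
      unfolding t_def[symmetric] unfolding t(2)[symmetric] by linarith
  qed
  have "\<delta>^2 \<le> t * t" using \<sigma> h t(2) by simp
  then have "h / (t * t) \<le> h / \<delta>^2" using h \<delta> t(1) by (intro divide_left_mono) auto
  then have "1 - h / \<delta>^2 \<le> 1 - h / (t * t)" by simp
  also have "\<dots> = \<sigma> / (t * t)" unfolding t(2) using \<sigma>0 h by (simp add: field_simps)
  also have "\<dots> \<le> sqrt \<sigma> / t"
  proof -
    have "sqrt \<sigma> \<le> t" unfolding t_def using h by simp
    then have "sqrt \<sigma> * sqrt \<sigma> \<le> sqrt \<sigma> * t" using mult_left_mono[of "sqrt \<sigma>" t "sqrt \<sigma>"] \<sigma>0 by simp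
    then have "\<sigma> \<le> sqrt \<sigma> * t" using \<sigma>0 by simp
    then show ?thesis using t(1) by (simp add: divide_simps)
  qed
  finally have "a * (1 - h / \<delta>^2) \<le> a * (sqrt \<sigma> / t)" using a by (intro mult_left_mono) auto
  moreover have "2 * (a / (2 * t) - b) * sqrt \<sigma> = a * (sqrt \<sigma> / t) - 2 * b * sqrt \<sigma>"
    using t(1) by (simp add: field_simps)
  ultimately show "a - a * h / \<delta>^2 - 2 * b * sqrt \<sigma> \<le> 2 * (a / (2 * sqrt (\<sigma> + h)) - b) * sqrt \<sigma>"
    by (simp add: t_def[symmetric] algebra_simps)
qed

lemma sqrt_profile_max_lower:
  fixes u :: "'a::real_normed_vector \<Rightarrow> real"
  assumes K: "K = (\<lambda>s. a * sqrt (s + h) - b * s)" and a: "0 \<le> a" and b: "0 \<le> b" and h: "0 < h"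
    and y: "y \<in> S"
    and max: "\<forall>x\<in>S. u x - K ((norm (x - z))^2) \<le> u x0 - K ((norm (x0 - z))^2)"
  shows "u y - a * dist y z - b * (norm (x0 - z))^2 \<le> u x0"
proof -
  have "sqrt ((norm (y - z))^2 + h) \<le> sqrt ((dist y z + sqrt h)^2)"
    using h by (intro real_sqrt_le_mono) (simp add: power2_sum dist_norm)
  then have "a * sqrt ((norm (y - z))^2 + h) \<le> a * (dist y z + sqrt h)"
    using a h by (simp add: mult_left_mono)
  moreover have "0 \<le> b * (norm (y - z))^2" using b by simp
  ultimately have "K ((norm (y - z))^2) \<le> a * (dist y z + sqrt h)"
    by (simp add: K)
  moreover have "a * sqrt h \<le> a * sqrt ((norm (x0 - z))^2 + h)"
    using a by (simp add: mult_left_mono)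
  ultimately show ?thesis
    using max y by (fastforce simp: K algebra_simps)
qed

lemma sqrt_profile_test_contradiction:
  fixes \<Omega> :: "'a::euclidean_space set"
  assumes op: "open \<Omega>" and cv: "convex \<Omega>" and sb: "smooth_boundary_with_normal \<Omega> \<nu>"
    and sub: "visc_subsolution \<Omega> \<nu> \<Lambda> u" and z: "z \<in> \<Omega>"
    and K: "K = (\<lambda>s. a * sqrt (s + h) - b * s)"
    and a: "0 < a" and b: "0 < b" and h: "0 < h" and \<delta>: "0 < \<delta>"
    and x0: "x0 \<in> closure \<Omega>"
    and max: "\<forall>x\<in>closure \<Omega>. u x - K ((norm (x - z))^2) \<le> u x0 - K ((norm (x0 - z))^2)"
    and far: "\<delta> \<le> norm (x0 - z)" and D: "norm (x0 - z) \<le> D" and ah: "a * h \<le> b * \<delta>^3"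
    and \<Lambda>: "0 \<le> \<Lambda>" and M: "0 \<le> M" "u x0 \<le> M"
    and slope: "\<Lambda> * M < a - a * h / \<delta>^2 - 2 * b * D"
  shows False
proof -
  define K1 where "K1 = (\<lambda>s::real. a / (2 * sqrt (s + h)) - b)"
  define K2 where "K2 = (\<lambda>s::real. - a / (4 * (s + h) * sqrt (s + h)))"
  have prof: "radial_profile K K1 K2"
    unfolding K K1_def K2_def by (rule radial_profile_sqrt[OF h])
  define \<sigma> where "\<sigma> = (norm (x0 - z))^2"
  have \<sigma>: "\<delta>^2 \<le> \<sigma>" unfolding \<sigma>_def using far \<delta> by (intro power_mono) auto
  have sqrt\<sigma>: "sqrt \<sigma> = norm (x0 - z)" by (simp add: \<sigma>_def)
  have concave: "2 * K2 \<sigma> * \<sigma> + K1 \<sigma> < 0"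
    using sqrt_profile_estimates(1)[OF a b h \<delta> \<sigma> ah] by (simp add: K1_def K2_def)
  have steep: "\<Lambda> * M < 2 * K1 \<sigma> * norm (x0 - z)"
  proof -
    have "a - a * h / \<delta>^2 - 2 * b * norm (x0 - z) \<le> 2 * K1 \<sigma> * norm (x0 - z)"
      using sqrt_profile_estimates(2)[OF a b h \<delta> \<sigma>] by (simp add: K1_def sqrt\<sigma>)
    moreover have "2 * b * norm (x0 - z) \<le> 2 * b * D" using D b by simp
    ultimately show ?thesis using slope by linarith
  qed
  have K1_pos: "0 < K1 \<sigma>"
  proof -
    have "0 \<le> \<Lambda> * M" using \<Lambda> M(1) by simp
    then have "0 < 2 * K1 \<sigma> * norm (x0 - z)" using steep by linarith
    then show ?thesis using far \<delta> by (simp add: zero_less_mult_iff)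
  qed
  show False
  proof (rule radial_test_concave[OF op cv sb sub z prof x0 max \<sigma>_def _ K1_pos concave])
    have "0 < \<delta>^2" using \<delta> by simp
    then show "0 < \<sigma>" using \<sigma> by linarith
    have "\<Lambda> * u x0 \<le> \<Lambda> * M" using M(2) \<Lambda> by (simp add: mult_left_mono)
    then show "0 < u x0 \<longrightarrow> \<Lambda> * u x0 < 2 * K1 \<sigma> * norm (x0 - z)" using steep by simp
  qed
qed

text \<open>Otherwise the square-root profile of slope slightly above
  Lambda M has a maximiser far from z, where the square-root test applies.\<close>
lemma subsolution_cone_bound_interior:
  fixes \<Omega> :: "'a::euclidean_space set"
  assumes op: "open \<Omega>" and cv: "convex \<Omega>" and bd: "bounded \<Omega>"
    and sb: "smooth_boundary_with_normal \<Omega> \<nu>"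
    and sub: "visc_subsolution \<Omega> \<nu> \<Lambda> u" and cont: "continuous_on (closure \<Omega>) u"
    and \<Lambda>: "0 \<le> \<Lambda>" and xm: "xmax \<in> closure \<Omega>" and mx: "\<forall>x\<in>closure \<Omega>. u x \<le> u xmax"
    and M: "0 < u xmax" and z: "z \<in> \<Omega>"
  shows "u xmax - \<Lambda> * u xmax * dist xmax z \<le> u z"
proof (rule ccontr)
  define M where "M = u xmax"
  define r where "r = dist xmax z"
  define \<gamma> where "\<gamma> = M - \<Lambda> * M * r - u z"
  assume "\<not> ?thesis"
  then have \<gamma>: "0 < \<gamma>" by (simp add: \<gamma>_def M_def r_def)
  have zc: "z \<in> closure \<Omega>" using z closure_subset by blast
  have "0 < \<gamma> / 2" using \<gamma> by simp
  then obtain \<delta> where \<delta>: "0 < \<delta>" "\<delta> \<le> 1"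
    and near: "\<forall>x\<in>closure \<Omega>. dist x z < \<delta> \<longrightarrow> \<bar>u x - u z\<bar> < \<gamma> / 2"
    using continuous_on_small_radius[OF cont zc] by blast
  define D where "D = diameter (closure \<Omega>)"
  have Dist: "norm (x - z) \<le> D" if "x \<in> closure \<Omega>" for x
    using diameter_bounded_bound[OF bounded_closure[OF bd] that zc] by (simp add: D_def dist_norm)
  have \<Lambda>M: "0 \<le> \<Lambda> * M" using \<Lambda> M by (simp add: M_def)
  obtain \<theta> b h where \<theta>: "0 < \<theta>" "\<theta> * r < \<gamma> / 4" and b: "0 < b" "b \<le> \<gamma> / 4" "2 * b * D < \<theta> / 4"
    and h: "0 < h" "(\<Lambda> * M + \<theta>) * h / \<delta>^2 \<le> \<theta> / 4" "(\<Lambda> * M + \<theta>) * h \<le> b * \<delta>^3"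
    using cone_parameters[OF \<Lambda>M \<gamma> _ _ \<delta>(1), of r D] Dist[OF zc] by (auto simp: r_def)
  define a where "a = \<Lambda> * M + \<theta>"
  have a: "0 < a" using \<Lambda>M \<theta> by (simp add: a_def)
  define K where "K = (\<lambda>s::real. a * sqrt (s + h) - b * s)"
  have "radial_profile K (\<lambda>s. a / (2 * sqrt (s + h)) - b) (\<lambda>s. - a / (4 * (s + h) * sqrt (s + h)))"
    unfolding K_def by (rule radial_profile_sqrt[OF h(1)])
  moreover have "compact (closure \<Omega>)" "closure \<Omega> \<noteq> {}" using bd zc by auto
  ultimately obtain x0 where x0: "x0 \<in> closure \<Omega>"
    and max: "\<forall>x\<in>closure \<Omega>. u x - K ((norm (x - z))^2) \<le> u x0 - K ((norm (x0 - z))^2)"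
    using radial_max_exists[OF _ _ cont, of K _ _ z] by blast
  text \<open>The maximiser stays at distance at least delta from z: near z, u is too close to u z.\<close>
  have far: "\<delta> \<le> norm (x0 - z)"
  proof (rule ccontr)
    assume "\<not> ?thesis"
    then have close: "norm (x0 - z) < \<delta>" by simp
    then have "\<bar>u x0 - u z\<bar> < \<gamma> / 2" using near x0 by (simp add: dist_norm)
    moreover have "M - a * r - b * (norm (x0 - z))^2 \<le> u x0"
      using sqrt_profile_max_lower[OF K_def _ _ h(1) xm max] a b by (simp add: M_def r_def)
    moreover have "b * (norm (x0 - z))^2 \<le> \<gamma> / 4"
    proof -
      have "(norm (x0 - z))^2 \<le> 1" using close \<delta>(2) by (simp add: power_le_one)
      then show ?thesis using mult_left_le[of "(norm (x0 - z))^2" b] b by linarith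
    qed
    moreover have "a * r = \<Lambda> * M * r + \<theta> * r" by (simp add: a_def algebra_simps)
    ultimately have "\<gamma> / 4 \<le> \<theta> * r" using \<gamma>_def by linarith
    then show False using \<theta>(2) by simp
  qed
  show False
  proof (rule sqrt_profile_test_contradiction[OF op cv sb sub z K_def a b(1) h(1) \<delta>(1) x0 max far
        Dist[OF x0] _ \<Lambda> less_imp_le[OF M[folded M_def]]])
    show "a * h \<le> b * \<delta>^3" using h(3) by (simp add: a_def)
    show "u x0 \<le> M" using mx x0 by (simp add: M_def)
    show "\<Lambda> * M < a - a * h / \<delta>^2 - 2 * b * D" using h(2) b(3) \<theta>(1) by (simp add: a_def)
  qed
qed

lemma subsolution_cone_bound:
  fixes \<Omega> :: "'a::euclidean_space set"
  assumes op: "open \<Omega>" and cv: "convex \<Omega>" and bd: "bounded \<Omega>"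
    and sb: "smooth_boundary_with_normal \<Omega> \<nu>"
    and sub: "visc_subsolution \<Omega> \<nu> \<Lambda> u" and cont: "continuous_on (closure \<Omega>) u"
    and \<Lambda>: "0 \<le> \<Lambda>" and xm: "xmax \<in> closure \<Omega>" and mx: "\<forall>x\<in>closure \<Omega>. u x \<le> u xmax"
    and M: "0 < u xmax" and z: "z \<in> closure \<Omega>"
  shows "u xmax - \<Lambda> * u xmax * dist xmax z \<le> u z"
proof (rule ccontr)
  define f where "f = (\<lambda>w. u w - (u xmax - \<Lambda> * u xmax * dist xmax w))"
  assume "\<not> ?thesis"
  then have "f z < 0" by (simp add: f_def)
  moreover have "continuous_on (closure \<Omega>) f"
    unfolding f_def using cont by (intro continuous_intros) auto
  ultimately obtain z' where z': "z' \<in> \<Omega>" "f z' < 0" using negative_near_interior z by blast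
  then show False
    using subsolution_cone_bound_interior[OF op cv bd sb sub cont \<Lambda> xm mx M z'(1)] by (simp add: f_def)
qed

lemma open_diameter_pos:
  fixes \<Omega> :: "'a::euclidean_space set"
  assumes "open \<Omega>" "bounded \<Omega>" "x \<in> \<Omega>"
  shows "0 < diameter \<Omega>"
proof -
  obtain e where "e > 0" "ball x e \<subseteq> \<Omega>" using assms openE by blast
  then have "diameter (ball x e) \<le> diameter \<Omega>" using diameter_subset assms(2) by blast
  then have "2 * e \<le> diameter \<Omega>" using \<open>e > 0\<close> by simp
  then show ?thesis using \<open>e > 0\<close> by simp
qed

lemma diametral_point_in_frontier:
  fixes \<Omega> :: "'a::euclidean_space set"
  assumes op: "open \<Omega>" and bd: "bounded \<Omega>" and x: "x \<in> closure \<Omega>" and y: "y \<in> closure \<Omega>"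
    and diam: "dist x y = diameter \<Omega>" and pos: "0 < diameter \<Omega>"
  shows "x \<in> frontier \<Omega>"
proof -
  have "x \<notin> \<Omega>"
  proof
    assume "x \<in> \<Omega>"
    then obtain e where e: "e > 0" "ball x e \<subseteq> \<Omega>" using op openE by blast
    define n where "n = dist x y"
    have n: "0 < n" using diam pos by (simp add: n_def)
    define w where "w = x + (e / 2 / n) *\<^sub>R (x - y)"
    have "w \<in> \<Omega>" using e n by (auto simp: w_def dist_norm n_def)
    have "w - y = (1 + e / 2 / n) *\<^sub>R (x - y)" by (simp add: w_def algebra_simps)
    then have "dist w y = (1 + e / 2 / n) * n" using n e by (simp add: dist_norm n_def)
    also have "\<dots> = n + e / 2" using n by (simp add: field_simps)
    finally have "dist w y = n + e / 2" .
    moreover have "dist w y \<le> diameter \<Omega>"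
      using diameter_bounded_bound[OF bounded_closure[OF bd] _ y] \<open>w \<in> \<Omega>\<close> closure_subset
        diameter_closure[OF bd] by fastforce
    ultimately show False using diam e by (simp add: n_def)
  qed
  then show ?thesis using x op by (simp add: frontier_def interior_open)
qed

lemma cone_bounds_diametral:
  fixes u :: "'a::euclidean_space \<Rightarrow> real"
  assumes S: "convex S" "xmax \<in> S" "xmin \<in> S" and d: "0 < d" "dist xmax xmin \<le> d"
    and M: "0 < u xmax" and m: "u xmin < 0"
    and upper: "\<forall>z\<in>S. u xmax - (2 / d) * u xmax * dist xmax z \<le> u z"
    and lower: "\<forall>z\<in>S. - u xmin - (2 / d) * (- u xmin) * dist xmin z \<le> - u z"
  shows "dist xmax xmin = d"
proof (rule ccontr)
  assume "dist xmax xmin \<noteq> d"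
  then have lt: "dist xmax xmin < d" using d by simp
  define z where "z = midpoint xmax xmin"
  have zS: "z \<in> S"
    using S closed_segment_subset midpoint_in_closed_segment unfolding z_def convex_contains_segment by blast
  define f where "f = 1 - (2 / d) * (dist xmax xmin / 2)"
  have f: "0 < f" using lt d by (simp add: f_def field_simps)
  have "dist xmax z = dist xmax xmin / 2" "dist xmin z = dist xmax xmin / 2"
    by (simp_all add: z_def dist_midpoint dist_commute)
  then have "u xmax * f \<le> u z" "- u xmin * f \<le> - u z"
    using upper lower zS unfolding f_def by (auto simp: algebra_simps)
  moreover have "0 < u xmax * f" "0 < - u xmin * f" using M m f by (auto simp: mult_neg_pos)
  ultimately show False by linarith
qed

theorem corollary4:
  fixes \<Omega> :: "'a::euclidean_space set" and \<nu> :: "'a \<Rightarrow> 'a" and u :: "'a \<Rightarrow> real"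
    and xmax xmin :: 'a
  assumes "open \<Omega>" and "bounded \<Omega>" and "convex \<Omega>"
    and "smooth_boundary_with_normal \<Omega> \<nu>"
    and "visc_solution \<Omega> \<nu> (2 / diameter \<Omega>) u"
    and "\<not> (\<exists>c. \<forall>x\<in>closure \<Omega>. u x = c)"
    and "xmax \<in> closure \<Omega>" and "\<forall>x\<in>closure \<Omega>. u x \<le> u xmax"
    and "xmin \<in> closure \<Omega>" and "\<forall>x\<in>closure \<Omega>. u xmin \<le> u x"
  shows "dist xmax xmin = diameter \<Omega> \<and> xmax \<in> frontier \<Omega> \<and> xmin \<in> frontier \<Omega>"
proof -
  note geom = assms(1,3,2,4)
  obtain p where p: "p \<in> closure \<Omega>" "u p \<noteq> 0" using assms(6) by blast
  then have d: "0 < diameter \<Omega>"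
    using open_diameter_pos[OF assms(1,2)] closure_empty by (metis all_not_in_conv)
  then have \<Lambda>: "0 < 2 / diameter \<Omega>" by simp
  have cont: "continuous_on (closure \<Omega>) u" and sub: "visc_subsolution \<Omega> \<nu> (2 / diameter \<Omega>) u"
    and subn: "visc_subsolution \<Omega> \<nu> (2 / diameter \<Omega>) (\<lambda>x. - u x)"
    using assms(5) supersolution_neg_subsolution by (auto simp: visc_solution_def)
  have contn: "continuous_on (closure \<Omega>) (\<lambda>x. - u x)" using cont by (intro continuous_intros)
  have M: "0 < u xmax" using subsolution_max_positive[OF geom sub cont \<Lambda> assms(8) p] .
  have m: "0 < - u xmin"
    using subsolution_max_positive[OF geom subn contn \<Lambda> _ p(1)] assms(10) p(2) by simp
  have "dist xmax xmin = diameter \<Omega>"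
  proof (rule cone_bounds_diametral[OF convex_closure[OF assms(3)] assms(7,9) d])
    show "dist xmax xmin \<le> diameter \<Omega>"
      using diameter_bounded_bound[OF bounded_closure[OF assms(2)] assms(7,9)] diameter_closure[OF assms(2)]
      by simp
    show "\<forall>z\<in>closure \<Omega>. u xmax - 2 / diameter \<Omega> * u xmax * dist xmax z \<le> u z"
      using subsolution_cone_bound[OF geom sub cont less_imp_le[OF \<Lambda>] assms(7,8) M] by blast
    show "\<forall>z\<in>closure \<Omega>. - u xmin - 2 / diameter \<Omega> * - u xmin * dist xmin z \<le> - u z"
      using subsolution_cone_bound[OF geom subn contn less_imp_le[OF \<Lambda>] assms(9) _ m] assms(10) by simp
  qed (use M m in auto)
  then show ?thesis
    using diametral_point_in_frontier[OF assms(1,2) _ _ _ d] assms(7,9) by (metis dist_commute)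
qed

end
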